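(* Let $(V_i,W_{i\oplus_5 1})$, $i\in\{1,\ldots,5\}$, be a consistently connected KCBS-system satisfying the KCBS exclusion, and let $p_i=\Pr[V_i=1]=\Pr[W_i=1]$. Then $$\mathsf{s}_{odd}\big(\langle V_iW_{i\oplus_5 1}\rangle:i\in\{1,\ldots,5\}\big)\le 3$$ holds if and only if $\sum_{i=1}^5 p_i\le 2$.
   Context: $\oplus_5$ denotes cyclic addition on $\{1,\ldots,5\}$ ($5\oplus_5 1=1$). A KCBS-system consists of five jointly distributed pairs $(V_i,W_{i\oplus_5 1})$, $i=1,\ldots,5$, of $\pm1$-valued random variables, variables in different pairs being stochastically unrelated. It is consistently connected if $V_i$ and $W_i$ have the same distribution for each $i$. It satisfies the KCBS exclusion if $\Pr[V_i=1,W_{i\oplus_5 1}=1]=0$ for each $i$. $\langle\cdot\rangle$ denotes expectation. For reals $a_1,\ldots,a_m$, $\mathsf{s}_{odd}(a_1,\ldots,a_m)$ is the maximum of $\sum_{i=1}^m(\pm a_i)$ over all sign choices with an odd number of minus signs. *)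

theory Defs
  imports "HOL-Probability.Probability"
begin

definition succ5 :: "nat \<Rightarrow> nat" where
  "succ5 i = (if i = 5 then 1 else i + 1)"

definition pred5 :: "nat \<Rightarrow> nat" where
  "pred5 i = (if i = 1 then 5 else i - 1)"

definition s_odd :: "real list \<Rightarrow> real" where
  "s_odd as = Max {sum_list (map2 (*) ss as) | ss.
      length ss = length as \<and> set ss \<subseteq> {-1, 1} \<and> odd (length (filter (\<lambda>s. s = -1) ss))}"

text \<open>A KCBS-system: for each i in {1..5}, P i is the joint distribution of the pair
  (V_i, W_{i \<oplus>_5 1}) of +/-1 valued random variables (first component V_i,
  second component W_{i \<oplus>_5 1}). Different pairs are stochastically unrelated,
  so only the five joint distributions matter.\<close>
definition kcbs_system :: "(nat \<Rightarrow> (real \<times> real) pmf) \<Rightarrow> bool" where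
  "kcbs_system P \<longleftrightarrow> (\<forall>i\<in>{1..5}. set_pmf (P i) \<subseteq> {-1, 1} \<times> {-1, 1})"

text \<open>Distribution of V_i is the first marginal of P i; distribution of W_i is the second
  marginal of P (pred5 i).\<close>
definition consistently_connected :: "(nat \<Rightarrow> (real \<times> real) pmf) \<Rightarrow> bool" where
  "consistently_connected P \<longleftrightarrow> (\<forall>i\<in>{1..5}. map_pmf fst (P i) = map_pmf snd (P (pred5 i)))"

definition kcbs_exclusion :: "(nat \<Rightarrow> (real \<times> real) pmf) \<Rightarrow> bool" where
  "kcbs_exclusion P \<longleftrightarrow> (\<forall>i\<in>{1..5}. measure_pmf.prob (P i) {(1, 1)} = 0)"

definition pV :: "(nat \<Rightarrow> (real \<times> real) pmf) \<Rightarrow> nat \<Rightarrow> real" where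
  "pV P i = measure_pmf.prob (P i) {x. fst x = 1}"

definition corr :: "(nat \<Rightarrow> (real \<times> real) pmf) \<Rightarrow> nat \<Rightarrow> real" where
  "corr P i = measure_pmf.expectation (P i) (\<lambda>x. fst x * snd x)"

end

theory Submission
  imports Defs
begin

text \<open>Under the exclusion every pair takes values in {(1,-1), (-1,1), (-1,-1)}, so
  \<langle>V_i W_(i+1)\<rangle> = 1 - 2 (p_i + p_(i+1)) with p_i + p_(i+1) \<le> 1. The all-minus sign choice
  then gives 4 \<Sum> p_i - 5, which is at most 3 iff \<Sum> p_i \<le> 2; every other odd sign choice is
  bounded by 3 using only these linear constraints on the p_i.\<close>

lemma exclusive_pair_pmf:
  fixes M :: "(real \<times> real) pmf"
  assumes support: "set_pmf M \<subseteq> {-1, 1} \<times> {-1, 1}"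
    and exclusion: "measure_pmf.prob M {(1, 1)} = 0"
  shows "measure_pmf.expectation M (\<lambda>x. fst x * snd x) =
           1 - 2 * measure_pmf.prob M {x. fst x = 1} - 2 * measure_pmf.prob M {x. snd x = 1}"
    and "measure_pmf.prob M {x. fst x = 1} + measure_pmf.prob M {x. snd x = 1} \<le> 1"
proof -
  let ?A = "{(1, 1), (1, -1), (-1, 1), (-1, -1)} :: (real \<times> real) set"
  have expectation: "measure_pmf.expectation M f = (\<Sum>a\<in>?A. f a * pmf M a)" for f
    by (rule integral_measure_pmf_real) (use support in auto)
  have prob: "measure_pmf.prob M B = (\<Sum>a\<in>?A. indicator B a * pmf M a)" for B
    using expectation[of "indicator B"] by simp
  have total: "(\<Sum>a\<in>?A. pmf M a) = 1"
    using expectation[of "\<lambda>_. 1"] by simp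
  have no_joint_one: "pmf M (1, 1) = 0"
    using prob[of "{(1, 1)}"] exclusion by (simp add: indicator_def)
  with total show "measure_pmf.expectation M (\<lambda>x. fst x * snd x) =
           1 - 2 * measure_pmf.prob M {x. fst x = 1} - 2 * measure_pmf.prob M {x. snd x = 1}"
    unfolding expectation prob by (simp add: indicator_def)
  from total no_joint_one
  show "measure_pmf.prob M {x. fst x = 1} + measure_pmf.prob M {x. snd x = 1} \<le> 1"
    unfolding prob by (simp add: indicator_def) (use pmf_nonneg[of M "(-1, -1)"] in linarith)
qed

lemma pred5_succ5 [simp]: "i \<in> {1..5} \<Longrightarrow> pred5 (succ5 i) = i"
  by (auto simp: succ5_def pred5_def)

lemma succ5_in_range: "i \<in> {1..5} \<Longrightarrow> succ5 i \<in> {1..5}"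
  by (auto simp: succ5_def)

lemma pV_succ5:
  assumes "consistently_connected P" and "i \<in> {1..5}"
  shows "pV P (succ5 i) = measure_pmf.prob (P i) {x. snd x = 1}"
proof -
  have "map_pmf fst (P (succ5 i)) = map_pmf snd (P i)"
    using assms succ5_in_range unfolding consistently_connected_def by fastforce
  then have "measure_pmf.prob (map_pmf fst (P (succ5 i))) {1} =
             measure_pmf.prob (map_pmf snd (P i)) {1}"
    by simp
  then show ?thesis
    unfolding pV_def by (simp add: vimage_def)
qed

lemma kcbs_corr_pV:
  assumes "kcbs_system P" "consistently_connected P" "kcbs_exclusion P" and i: "i \<in> {1..5}"
  shows "corr P i = 1 - 2 * (pV P i + pV P (succ5 i))"
    and "pV P i + pV P (succ5 i) \<le> 1"
proof -
  have "set_pmf (P i) \<subseteq> {-1, 1} \<times> {-1, 1}" "measure_pmf.prob (P i) {(1, 1)} = 0"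
    using assms i unfolding kcbs_system_def kcbs_exclusion_def by blast+
  note pair = exclusive_pair_pmf[OF this]
  show "corr P i = 1 - 2 * (pV P i + pV P (succ5 i))"
    using pair(1) pV_succ5[OF assms(2) i] unfolding corr_def pV_def by simp
  show "pV P i + pV P (succ5 i) \<le> 1"
    using pair(2) pV_succ5[OF assms(2) i] unfolding pV_def by simp
qed

lemma s_odd_le_iff:
  assumes "as \<noteq> []"
  shows "s_odd as \<le> t \<longleftrightarrow>
    (\<forall>ss. length ss = length as \<and> set ss \<subseteq> {-1, 1} \<and> odd (length (filter (\<lambda>s. s = -1) ss))
       \<longrightarrow> sum_list (map2 (*) ss as) \<le> t)"
proof -
  define S where "S = {sum_list (map2 (*) ss as) | ss.
      length ss = length as \<and> set ss \<subseteq> {-1, 1} \<and> odd (length (filter (\<lambda>s. s = -1) ss))}"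
  have "S \<subseteq> (\<lambda>ss. sum_list (map2 (*) ss as)) ` {ss. set ss \<subseteq> {-1, 1} \<and> length ss = length as}"
    unfolding S_def by auto
  moreover have "finite {ss. set ss \<subseteq> {-1, 1 :: real} \<and> length ss = length as}"
    by (rule finite_lists_length_eq) simp
  ultimately have "finite S"
    by (meson finite_surj)
  moreover have "S \<noteq> {}"
  proof -
    let ?ss = "-1 # replicate (length as - 1) (1 :: real)"
    have "sum_list (map2 (*) ?ss as) \<in> S"
      using assms unfolding S_def by (intro CollectI exI[of _ ?ss]) auto
    then show ?thesis by blast
  qed
  ultimately show ?thesis
    unfolding s_odd_def S_def[symmetric] by (auto simp: Max_le_iff S_def)
qed

lemma length_5_cases:
  assumes "length (ss :: 'a list) = 5"
  obtains a b c d e where "ss = [a, b, c, d, e]"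
  using assms by (auto simp: numeral_eq_Suc length_Suc_conv)

lemma odd_sign_sums_le_3_iff:
  fixes p :: "nat \<Rightarrow> real"
  assumes nonneg: "\<forall>i\<in>{1..5}. p i \<ge> 0"
    and adjacent: "\<forall>i\<in>{1..5}. p i + p (succ5 i) \<le> 1"
  shows "(\<forall>ss. length ss = 5 \<and> set ss \<subseteq> {-1, 1} \<and> odd (length (filter (\<lambda>s. s = -1) ss))
            \<longrightarrow> sum_list (map2 (*) ss (map (\<lambda>i. 1 - 2 * (p i + p (succ5 i))) [1..<6])) \<le> 3)
         \<longleftrightarrow> (\<Sum>i=1..5. p i) \<le> 2"
    (is "(\<forall>ss. ?odd_signs ss \<longrightarrow> sum_list (map2 (*) ss ?c) \<le> 3) \<longleftrightarrow> _")
proof -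
  have c: "?c = [1 - 2 * (p 1 + p 2), 1 - 2 * (p 2 + p 3), 1 - 2 * (p 3 + p 4),
                 1 - 2 * (p 4 + p 5), 1 - 2 * (p 5 + p 1)]"
    by (simp add: upt_rec numeral_eq_Suc succ5_def)
  have total: "(\<Sum>i=1..5. p i) = p 1 + p 2 + p 3 + p 4 + p 5"
    by (simp add: numeral_eq_Suc)
  have p_nonneg: "p 1 \<ge> 0" "p 2 \<ge> 0" "p 3 \<ge> 0" "p 4 \<ge> 0" "p 5 \<ge> 0"
    using nonneg by simp_all
  have succ5: "succ5 1 = 2" "succ5 2 = 3" "succ5 3 = 4" "succ5 4 = 5" "succ5 5 = 1"
    by (simp_all add: succ5_def)
  have p_adjacent: "p 1 + p 2 \<le> 1" "p 2 + p 3 \<le> 1" "p 3 + p 4 \<le> 1" "p 4 + p 5 \<le> 1"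
      "p 5 + p 1 \<le> 1"
    using adjacent[rule_format, of 1] adjacent[rule_format, of 2] adjacent[rule_format, of 3]
      adjacent[rule_format, of 4] adjacent[rule_format, of 5]
    unfolding succ5 by simp_all
  show ?thesis
  proof
    assume "\<forall>ss. ?odd_signs ss \<longrightarrow> sum_list (map2 (*) ss ?c) \<le> 3"
    moreover have "?odd_signs (replicate 5 (-1))"
      by simp
    ultimately have "sum_list (map2 (*) (replicate 5 (-1)) ?c) \<le> 3"
      by blast
    then show "(\<Sum>i=1..5. p i) \<le> 2"
      unfolding c total by (simp add: numeral_eq_Suc)
  next
    assume "(\<Sum>i=1..5. p i) \<le> 2"
    show "\<forall>ss. ?odd_signs ss \<longrightarrow> sum_list (map2 (*) ss ?c) \<le> 3"
    proof (intro allI impI)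
      fix ss assume signs: "?odd_signs ss"
      then obtain a b d e f where ss: "ss = [a, b, d, e, f]"
        using length_5_cases by blast
      have "a \<in> {-1, 1}" "b \<in> {-1, 1}" "d \<in> {-1, 1}" "e \<in> {-1, 1}" "f \<in> {-1, 1}"
        using signs unfolding ss by auto
      then show "sum_list (map2 (*) ss ?c) \<le> 3"
        using signs \<open>(\<Sum>i=1..5. p i) \<le> 2\<close> p_nonneg p_adjacent unfolding ss c total by auto
    qed
  qed
qed

theorem theorem34:
  fixes P :: "nat \<Rightarrow> (real \<times> real) pmf"
  assumes "kcbs_system P"
    and "consistently_connected P"
    and "kcbs_exclusion P"
  shows "s_odd (map (corr P) [1..<6]) \<le> 3 \<longleftrightarrow> (\<Sum>i=1..5. pV P i) \<le> 2"
proof -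
  note kcbs = kcbs_corr_pV[OF assms]
  have corr: "map (corr P) [1..<6] = map (\<lambda>i. 1 - 2 * (pV P i + pV P (succ5 i))) [1..<6]"
    using kcbs(1) by (intro map_cong) auto
  have nonneg: "\<forall>i\<in>{1..5}. pV P i \<ge> 0"
    unfolding pV_def by simp
  have adjacent: "\<forall>i\<in>{1..5}. pV P i + pV P (succ5 i) \<le> 1"
    using kcbs(2) by blast
  let ?c = "map (\<lambda>i. 1 - 2 * (pV P i + pV P (succ5 i))) [1..<6]"
  have "?c \<noteq> []" and length_c: "length ?c = 5"
    by simp_all
  show ?thesis
    unfolding corr s_odd_le_iff[OF \<open>?c \<noteq> []\<close>] length_c
    by (rule odd_sign_sums_le_3_iff[OF nonneg adjacent])
qed

end
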